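(* Let $d\ge2$, $0\le r\le d-1$ and $M\ge1$ be integers. Let $N_{r,d}(M)$ be the number of distinct orbits $o(\mathbf{x})$ with $\mathbf{x}\in[0,M]^2\cap\mathbb{Z}^2$ and $\operatorname{length}(o(\mathbf{x}))\equiv r\pmod d$. Then $$N_{r,d}(M)=\begin{cases}0,& \text{if } 2\,\|\, d \text{ and } 2\nmid r,\ \text{or } 4\mid d\text{ and } 4\nmid r;\\ \frac1d M^2+O(M),&\text{if } 2\,\|\, d\text{ and } 2\mid r;\\ \frac2dM^2+O(M),&\text{if } 4\mid d\text{ and }4\mid r;\\ \frac1{2d}M^2+O(M),&\text{if }2\nmid d.\end{cases}$$ Here $2\,\|\,d$ means $2\mid d$ and $4\nmid d$.
   Context: Define $\mathcal K_1,\mathcal K_2:\mathbb{Z}^2\to\mathbb{Z}^2$ by $\mathcal K_1(x_1,x_2)=(-x_1+x_2,x_2)$ and $\mathcal K_2(x_1,x_2)=(x_1,x_1-x_2)$. The orbit $o(\mathbf{x})$ of $\mathbf{x}=(x_1,x_2)$ is the set of points obtained from $\mathbf{x}$ by repeatedly applying $\mathcal K_1$ and $\mathcal K_2$. It consists of $(x_1,x_2)$, $(-x_1+x_2,x_2)$, $(-x_1+x_2,-x_1)$, $(-x_2,-x_1)$, $(-x_2,x_1-x_2)$, $(x_1,x_1-x_2)$. Orbits partition $\mathbb{Z}^2$. The length (perimeter) of the orbit is the Euclidean length of the closed path through these six points in the listed order: $$\operatorname{length}(o(\mathbf{x}))=2\big(|2x_1-x_2|+|x_1+x_2|+|2x_2-x_1|\big).$$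 *)

theory Defs
  imports Complex_Main "HOL-Number_Theory.Cong"
begin

definition K1 :: "int \<times> int \<Rightarrow> int \<times> int" where
  "K1 p = (- fst p + snd p, snd p)"

definition K2 :: "int \<times> int \<Rightarrow> int \<times> int" where
  "K2 p = (fst p, fst p - snd p)"

definition Kstep :: "((int \<times> int) \<times> (int \<times> int)) set" where
  "Kstep = {(p, K1 p) | p. True} \<union> {(p, K2 p) | p. True}"

definition orbit :: "int \<times> int \<Rightarrow> (int \<times> int) set" where
  "orbit x = {y. (x, y) \<in> Kstep\<^sup>*}"

text \<open>Length (perimeter) of the orbit of x, given by the closed formula.\<close>
definition orbit_length :: "int \<times> int \<Rightarrow> int" where
  "orbit_length x = 2 * (\<bar>2 * fst x - snd x\<bar> + \<bar>fst x + snd x\<bar> + \<bar>2 * snd x - fst x\<bar>)"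

definition box :: "nat \<Rightarrow> (int \<times> int) set" where
  "box M = {x. 0 \<le> fst x \<and> fst x \<le> int M \<and> 0 \<le> snd x \<and> snd x \<le> int M}"

definition N_count :: "int \<Rightarrow> int \<Rightarrow> nat \<Rightarrow> nat" where
  "N_count r d M = card {orbit x | x. x \<in> box M \<and> [orbit_length x = r] (mod d)}"

end

theory Submission
  imports Defs
begin

(*
  K1 and K2 are involutions preserving the length, so orbits are the classes of an equivalence
  relation on which the length is constant. Every orbit meeting the box [0,M]^2 meets the cone
  a <= 2b, b <= 2a inside that box in exactly one point, and there the length is 4(a+b). So
  N_{r,d}(M) counts the lattice points (a,b) of the cone in the box with 4(a+b) = r (mod d).
  With g = gcd(4,d) this congruence is unsolvable unless g divides r, and otherwise it says that
  a+b lies in a fixed residue class modulo d/g. Passing from the box [0,M]^2 to [0,M+1]^2 adds a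
  column and a row of the cone, each of length about M/2, which changes 2(d/g) times the count by
  2M+1 + O(d/g). Hence the count is g M^2/(2d) + O(M), and g = 1, 2, 4 gives the three cases.
*)

lemma K1_K1 [simp]: "K1 (K1 p) = p"
  by (simp add: K1_def)

lemma K2_K2 [simp]: "K2 (K2 p) = p"
  by (simp add: K2_def)

lemma Kstep_iff: "(p, q) \<in> Kstep \<longleftrightarrow> q = K1 p \<or> q = K2 p"
  unfolding Kstep_def by blast

lemma sym_Kstep: "sym Kstep"
  by (auto intro!: symI simp: Kstep_iff)

lemma orbit_refl: "x \<in> orbit x"
  by (simp add: orbit_def)

lemma K1_in_orbit: "K1 x \<in> orbit x" and K2_in_orbit: "K2 x \<in> orbit x"
  by (auto simp: orbit_def Kstep_iff)

lemma orbit_eq_if_mem: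
  assumes "y \<in> orbit x" shows "orbit y = orbit x"
proof -
  have xy: "(x, y) \<in> Kstep\<^sup>*" and yx: "(y, x) \<in> Kstep\<^sup>*"
    using assms sym_rtrancl[OF sym_Kstep] by (auto simp: orbit_def dest: symD)
  show ?thesis
    unfolding orbit_def using rtrancl_trans[OF xy] rtrancl_trans[OF yx] by blast
qed

lemma orbit_length_K1: "orbit_length (K1 p) = orbit_length p"
  by (simp add: orbit_length_def K1_def; arith)

lemma orbit_length_K2: "orbit_length (K2 p) = orbit_length p"
  by (simp add: orbit_length_def K2_def; arith)

lemma orbit_length_eq_if_mem:
  assumes "y \<in> orbit x" shows "orbit_length y = orbit_length x"
proof -
  have "(x, y) \<in> Kstep\<^sup>*" using assms by (simp add: orbit_def)
  then show ?thesis
    by induction (auto simp: Kstep_iff orbit_length_K1 orbit_length_K2)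
qed

lemma orbit_subset_hexagon:
  "orbit (a, b) \<subseteq> {(a, b), (b - a, b), (b - a, - a), (- b, - a), (- b, a - b), (a, a - b)}"
  (is "_ \<subseteq> ?hexagon")
proof
  fix y assume "y \<in> orbit (a, b)"
  then have "((a, b), y) \<in> Kstep\<^sup>*" by (simp add: orbit_def)
  then show "y \<in> ?hexagon"
  proof induction
    case (step y z)
    from step(2,3) show ?case
      unfolding Kstep_iff by (elim disjE insertE) (simp_all add: K1_def K2_def)
  qed simp
qed

definition cone :: "(int \<times> int) set" where
  "cone = {p. fst p \<le> 2 * snd p \<and> snd p \<le> 2 * fst p}"

lemma orbit_length_cone: "p \<in> cone \<Longrightarrow> orbit_length p = 4 * (fst p + snd p)"
  by (auto simp: cone_def orbit_length_def)

lemma cone_orbit_unique: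
  assumes "p \<in> cone" "q \<in> cone" "q \<in> orbit p" shows "q = p"
proof -
  obtain a b where "p = (a, b)" by fastforce
  then show ?thesis using assms orbit_subset_hexagon[of a b] by (auto simp: cone_def)
qed

lemma orbit_meets_cone_box:
  assumes "x \<in> box M" shows "\<exists>y \<in> cone \<inter> box M. y \<in> orbit x"
proof -
  obtain a b where x: "x = (a, b)" by fastforce
  consider "x \<in> cone" | "2 * b < a" | "2 * a < b" unfolding x cone_def by force
  then show ?thesis
  proof cases
    case 1 then show ?thesis using assms orbit_refl by blast
  next
    case 2 then show ?thesis
      using assms K2_in_orbit[of x] by (intro bexI[of _ "K2 x"]) (auto simp: x K2_def cone_def box_def)
  next
    case 3 then show ?thesis
      using assms K1_in_orbit[of x] by (intro bexI[of _ "K1 x"]) (auto simp: x K1_def cone_def box_def)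
  qed
qed

lemma N_count_cone:
  "N_count r d M = card {p \<in> cone \<inter> box M. [4 * (fst p + snd p) = r] (mod d)}"
proof -
  let ?S = "{p \<in> cone \<inter> box M. [4 * (fst p + snd p) = r] (mod d)}"
  have "{orbit x | x. x \<in> box M \<and> [orbit_length x = r] (mod d)} = orbit ` ?S"
  proof (intro set_eqI iffI)
    fix Q assume "Q \<in> {orbit x | x. x \<in> box M \<and> [orbit_length x = r] (mod d)}"
    then obtain x where x: "Q = orbit x" "x \<in> box M" "[orbit_length x = r] (mod d)" by blast
    then obtain y where "y \<in> cone \<inter> box M" "y \<in> orbit x"
      using orbit_meets_cone_box by blast
    moreover from this have "orbit_length x = 4 * (fst y + snd y)"
      by (metis IntD1 orbit_length_cone orbit_length_eq_if_mem)
    ultimately have "y \<in> ?S" "Q = orbit y"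
      using x by (auto simp: orbit_eq_if_mem)
    then show "Q \<in> orbit ` ?S" by blast
  next
    fix Q assume "Q \<in> orbit ` ?S"
    then obtain y where y: "y \<in> ?S" "Q = orbit y" by blast
    then have "Q = orbit y \<and> y \<in> box M \<and> [orbit_length y = r] (mod d)"
      by (simp add: orbit_length_cone)
    then show "Q \<in> {orbit x | x. x \<in> box M \<and> [orbit_length x = r] (mod d)}" by blast
  qed
  moreover have "inj_on orbit ?S"
  proof (rule inj_onI)
    fix p q assume "p \<in> ?S" "q \<in> ?S" "orbit p = orbit q"
    then show "p = q" using cone_orbit_unique[of q p] orbit_refl[of p] by simp
  qed
  ultimately show ?thesis unfolding N_count_def by (simp add: card_image)
qed

lemma less_eq_div_iff_mult_less_eq_int:
  fixes k x m :: int assumes "m > 0" shows "k \<le> x div m \<longleftrightarrow> m * k \<le> x"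
proof
  assume "k \<le> x div m"
  then have "m * k \<le> m * (x div m)" using assms by simp
  also have "\<dots> \<le> x" using assms by (simp add: minus_mod_eq_mult_div [symmetric])
  finally show "m * k \<le> x" .
next
  assume "m * k \<le> x"
  then show "k \<le> x div m" using zdiv_mono1[OF _ assms] assms by fastforce
qed

lemma residue_class_Icc_eq_image:
  fixes m :: int assumes "m > 0"
  shows "{b \<in> {lo..hi}. [b = c] (mod m)} = (\<lambda>k. c + m * k) ` {(lo - c - 1) div m + 1 .. (hi - c) div m}"
proof -
  have "[b = c] (mod m) \<longleftrightarrow> (\<exists>k. b = c + m * k)" for b
    using cong_iff_lin[of c b m] cong_sym_eq[of b c m] by simp
  then have "{b \<in> {lo..hi}. [b = c] (mod m)} = (\<lambda>k. c + m * k) ` {k. lo \<le> c + m * k \<and> c + m * k \<le> hi}"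
    by auto
  also have "{k. lo \<le> c + m * k \<and> c + m * k \<le> hi} = {(lo - c - 1) div m + 1 .. (hi - c) div m}"
  proof -
    have "c + m * k \<le> hi \<longleftrightarrow> k \<le> (hi - c) div m"
      and "lo \<le> c + m * k \<longleftrightarrow> \<not> k \<le> (lo - c - 1) div m" for k
      using less_eq_div_iff_mult_less_eq_int[OF assms] by auto
    then show ?thesis by auto
  qed
  finally show ?thesis .
qed

lemma card_residue_class_Icc:
  fixes m :: int assumes "m > 0" and "lo \<le> hi + 1"
  shows "\<bar>m * int (card {b \<in> {lo..hi}. [b = c] (mod m)}) - (hi - lo + 1)\<bar> \<le> m"
proof -
  define X Y where "X = hi - c" and "Y = lo - c - 1"
  have "inj (\<lambda>k. c + m * k)" using assms(1) by (auto intro: injI)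
  then have "int (card {b \<in> {lo..hi}. [b = c] (mod m)}) = X div m - Y div m"
    using residue_class_Icc_eq_image[OF assms(1)] zdiv_mono1[of Y X m] assms
    by (simp add: card_image inj_on_subset X_def Y_def)
  moreover have "X - m < m * (X div m)" "m * (X div m) \<le> X" "Y - m < m * (Y div m)" "m * (Y div m) \<le> Y"
    using assms(1) pos_mod_bound[of m] pos_mod_sign[of m] div_mult_mod_eq[of X m] div_mult_mod_eq[of Y m]
    by (smt (verit) mult.commute)+
  ultimately show ?thesis by (simp add: right_diff_distrib X_def Y_def)
qed

lemma card_cone_box_Suc:
  fixes P :: "int \<times> int \<Rightarrow> bool" and M :: nat
  defines "L \<equiv> (int M + 2) div 2"
  shows "card {p \<in> cone \<inter> box (Suc M). P p}
       = card {p \<in> cone \<inter> box M. P p} + card {b \<in> {L..int M + 1}. P (int M + 1, b)}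
         + card {a \<in> {L..int M}. P (a, int M + 1)}"
proof -
  let ?col = "(\<lambda>b. (int M + 1, b)) ` {b \<in> {L..int M + 1}. P (int M + 1, b)}"
  let ?row = "(\<lambda>a. (a, int M + 1)) ` {a \<in> {L..int M}. P (a, int M + 1)}"
  have L: "L \<le> b \<longleftrightarrow> int M + 1 \<le> 2 * b" for b
    unfolding L_def by linarith
  have "{p \<in> cone \<inter> box (Suc M). P p} = {p \<in> cone \<inter> box M. P p} \<union> ?col \<union> ?row"
  proof (intro set_eqI iffI)
    fix p assume p: "p \<in> {p \<in> cone \<inter> box (Suc M). P p}"
    obtain a b where ab: "p = (a, b)" by fastforce
    consider "a \<le> int M \<and> b \<le> int M" | "a = int M + 1" | "a \<le> int M \<and> b = int M + 1"
      using p ab unfolding box_def by force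
    then show "p \<in> {p \<in> cone \<inter> box M. P p} \<union> ?col \<union> ?row"
      by cases (use p ab in \<open>auto simp: cone_def box_def L\<close>)
  qed (auto simp: cone_def box_def L)
  moreover have "finite {p \<in> cone \<inter> box M. P p}"
    by (rule finite_subset[of _ "{0..int M} \<times> {0..int M}"]) (auto simp: box_def)
  moreover have "finite ?col" "finite ?row"
    by (intro finite_imageI finite_subset[OF _ finite_atLeastAtMost_int], fastforce)+
  moreover have "{p \<in> cone \<inter> box M. P p} \<inter> ?col = {}" "({p \<in> cone \<inter> box M. P p} \<union> ?col) \<inter> ?row = {}"
    by (auto simp: box_def)
  moreover have "card ?col = card {b \<in> {L..int M + 1}. P (int M + 1, b)}"
    and "card ?row = card {a \<in> {L..int M}. P (a, int M + 1)}"
    by (auto intro!: card_image inj_onI)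
  ultimately show ?thesis
    by (simp add: card_Un_disjoint)
qed

lemma card_cone_box_residue_bound:
  fixes m c :: int assumes m: "m > 0"
  shows "\<bar>2 * m * int (card {p \<in> cone \<inter> box M. [fst p + snd p = c] (mod m)}) - int M ^ 2\<bar>
           \<le> (4 * m + 3) * int M + 2 * m"
proof (induction M)
  case 0
  have "cone \<inter> box 0 = {(0, 0)}" by (auto simp: cone_def box_def)
  then have "card {p \<in> cone \<inter> box 0. [fst p + snd p = c] (mod m)} \<le> 1"
    by (simp add: Collect_conj_eq card_le_Suc0_iff_eq)
  then show ?case using m by (simp add: abs_le_iff)
next
  case (Suc M)
  define L where "L = (int M + 2) div 2"
  let ?N = "\<lambda>M. int (card {p \<in> cone \<inter> box M. [fst p + snd p = c] (mod m)})"
  let ?col = "int (card {b \<in> {L..int M + 1}. [b = c - (int M + 1)] (mod m)})"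
  let ?row = "int (card {a \<in> {L..int M}. [a = c - (int M + 1)] (mod m)})"
  have shift: "[x + y = c] (mod m) \<longleftrightarrow> [x = c - y] (mod m)" for x y
    using cong_add_rcancel[of x y "c - y" m] by simp
  have "?N (Suc M) = ?N M + ?col + ?row"
    using card_cone_box_Suc[where P = "\<lambda>p. [fst p + snd p = c] (mod m)" and M = M]
    by (simp add: L_def shift add.commute[of "int M + 1"])
  then have N: "2 * m * ?N (Suc M) = 2 * m * ?N M + 2 * (m * ?col) + 2 * (m * ?row)"
    by (simp add: algebra_simps)
  have L: "2 * L = int M + 1 \<or> 2 * L = int M + 2"
    unfolding L_def by presburger
  have col: "\<bar>m * ?col - (int M + 1 - L + 1)\<bar> \<le> m"
    by (rule card_residue_class_Icc[OF m]) (use L in linarith)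
  have row: "\<bar>m * ?row - (int M - L + 1)\<bar> \<le> m"
    by (rule card_residue_class_Icc[OF m]) (use L in linarith)
  have sq: "int (Suc M) ^ 2 = int M ^ 2 + 2 * int M + 1"
    by (simp add: power2_eq_square algebra_simps)
  have bound: "(4 * m + 3) * int (Suc M) + 2 * m = (4 * m + 3) * int M + 2 * m + (4 * m + 3)"
    by (simp add: algebra_simps)
  show ?case
    unfolding N sq bound using Suc.IH L col row by linarith
qed

lemma card_cone_box_residue_asymp:
  fixes m c :: int assumes m: "m > 0"
  shows "\<exists>C. \<forall>M::nat. M \<ge> 1 \<longrightarrow>
           \<bar>real (card {p \<in> cone \<inter> box M. [fst p + snd p = c] (mod m)}) - 1 / (2 * real_of_int m) * real M ^ 2\<bar>
             \<le> C * real M"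
proof (intro exI allI impI)
  fix M :: nat assume M: "M \<ge> 1"
  define K where "K = real_of_int m"
  define N where "N = real (card {p \<in> cone \<inter> box M. [fst p + snd p = c] (mod m)})"
  have K: "K > 0" using m by (simp add: K_def)
  have "\<bar>2 * K * N - real M ^ 2\<bar> \<le> (4 * K + 3) * real M + 2 * K"
    using card_cone_box_residue_bound[OF m, of M c, folded of_int_le_iff[where 'a = real]]
    by (simp add: K_def N_def)
  also have "\<dots> \<le> (6 * K + 3) * real M"
    using M K by (simp add: algebra_simps)
  finally have "\<bar>2 * K * N - real M ^ 2\<bar> / (2 * K) \<le> (6 * K + 3) / (2 * K) * real M"
    using K by (simp add: divide_right_mono)
  moreover have "N - 1 / (2 * K) * real M ^ 2 = (2 * K * N - real M ^ 2) / (2 * K)"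
    using K by (simp add: field_simps)
  ultimately show "\<bar>N - 1 / (2 * K) * real M ^ 2\<bar> \<le> (6 * K + 3) / (2 * K) * real M"
    using K by (simp add: abs_divide)
qed

lemma gcd_dvd_if_cong_mult:
  fixes k d r s :: int assumes "[k * s = r] (mod d)" shows "gcd k d dvd r"
proof -
  have "[k * s = r] (mod gcd k d)"
    using assms by (rule cong_dvd_modulus) simp
  then show ?thesis
    using cong_dvd_iff by (metis dvd_mult2 gcd_dvd1)
qed

lemma cong_mult_iff_cong_div_gcd:
  fixes k d r :: int assumes "d \<noteq> 0" and "gcd k d dvd r"
  obtains c where "\<And>s. [k * s = r] (mod d) \<longleftrightarrow> [s = c] (mod d div gcd k d)"
proof -
  obtain c where c: "[k * c = r] (mod d)"
    using cong_solve_dvd_int[OF assms(2)] by blast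
  define g where "g = gcd k d"
  have g: "g \<noteq> 0" "k = g * (k div g)" "d = g * (d div g)"
    using assms(1) by (simp_all add: g_def)
  have coprime: "coprime (d div g) (k div g)"
    using div_gcd_coprime[of k d] assms(1) by (simp add: g_def coprime_commute)
  have "[k * s = r] (mod d) \<longleftrightarrow> [s = c] (mod d div g)" for s
  proof -
    have "[k * s = r] (mod d) \<longleftrightarrow> [k * s = k * c] (mod d)"
      using c by (meson cong_sym cong_trans)
    also have "\<dots> \<longleftrightarrow> g * (d div g) dvd g * ((k div g) * (s - c))"
      by (subst (1 2) g(2), subst g(3)) (simp add: cong_iff_dvd_diff algebra_simps)
    also have "\<dots> \<longleftrightarrow> d div g dvd s - c"
      using g(1) coprime by (simp add: coprime_dvd_mult_right_iff)
    also have "\<dots> \<longleftrightarrow> [s = c] (mod d div g)"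
      by (simp add: cong_iff_dvd_diff)
    finally show ?thesis .
  qed
  then show thesis
    using that unfolding g_def by blast
qed

lemma N_count_eq_0:
  assumes "\<not> gcd 4 d dvd r" shows "N_count r d M = 0"
proof -
  have "{p \<in> cone \<inter> box M. [4 * (fst p + snd p) = r] (mod d)} = {}"
    using gcd_dvd_if_cong_mult assms by blast
  then show ?thesis unfolding N_count_cone by (simp only: card.empty)
qed

lemma N_count_asymp:
  fixes d r :: int assumes "d > 0" and "gcd 4 d dvd r"
  shows "\<exists>C. \<forall>M::nat. M \<ge> 1 \<longrightarrow>
           \<bar>real (N_count r d M) - real_of_int (gcd 4 d) / (2 * real_of_int d) * real M ^ 2\<bar> \<le> C * real M"
proof -
  obtain c where "\<And>s. [4 * s = r] (mod d) \<longleftrightarrow> [s = c] (mod d div gcd 4 d)"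
    using cong_mult_iff_cong_div_gcd[of d 4 r] assms by auto
  moreover have "d div gcd 4 d > 0"
    using assms(1) by (simp add: pos_imp_zdiv_pos_iff zdvd_imp_le)
  moreover have "real_of_int (gcd 4 d) / (2 * real_of_int d) = 1 / (2 * real_of_int (d div gcd 4 d))"
    using assms(1) by (simp add: real_of_int_div)
  ultimately show ?thesis
    unfolding N_count_cone using card_cone_box_residue_asymp by presburger
qed

lemma gcd_4_int: "gcd 4 d = (if 4 dvd d then 4 else if 2 dvd d then 2 else (1::int))"
proof -
  have "4 dvd d \<longleftrightarrow> d mod 4 = 0" "2 dvd d \<longleftrightarrow> d mod 4 = 0 \<or> d mod 4 = 2"
    and "d mod 4 = 0 \<or> d mod 4 = 1 \<or> d mod 4 = 2 \<or> d mod 4 = 3" by presburger+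
  then have "gcd 4 (d mod 4) = (if 4 dvd d then 4 else if 2 dvd d then 2 else (1::int))"
    by (auto simp del: gcd_mod_right simp: gcd_red_int[of 4 3])
  then show ?thesis by simp
qed

theorem theorem1p3:
  fixes d r :: int
  assumes "d \<ge> 2" and "0 \<le> r" and "r \<le> d - 1"
  shows "(((2 dvd d \<and> \<not> 4 dvd d \<and> \<not> 2 dvd r) \<or> (4 dvd d \<and> \<not> 4 dvd r))
           \<longrightarrow> (\<forall>M::nat. M \<ge> 1 \<longrightarrow> N_count r d M = 0))
    \<and> ((2 dvd d \<and> \<not> 4 dvd d \<and> 2 dvd r)
           \<longrightarrow> (\<exists>C::real. \<forall>M::nat. M \<ge> 1 \<longrightarrow>
                 \<bar>real (N_count r d M) - (1 / real_of_int d) * real M ^ 2\<bar> \<le> C * real M))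
    \<and> ((4 dvd d \<and> 4 dvd r)
           \<longrightarrow> (\<exists>C::real. \<forall>M::nat. M \<ge> 1 \<longrightarrow>
                 \<bar>real (N_count r d M) - (2 / real_of_int d) * real M ^ 2\<bar> \<le> C * real M))
    \<and> (\<not> 2 dvd d
           \<longrightarrow> (\<exists>C::real. \<forall>M::nat. M \<ge> 1 \<longrightarrow>
                 \<bar>real (N_count r d M) - (1 / (2 * real_of_int d)) * real M ^ 2\<bar> \<le> C * real M))"
proof -
  have d: "d > 0" using assms(1) by simp
  have "4 dvd d \<Longrightarrow> 2 dvd d" by presburger
  then consider "odd d" "gcd 4 d = 1" | "2 dvd d" "\<not> 4 dvd d" "gcd 4 d = 2" | "4 dvd d" "gcd 4 d = 4"
    by (cases "4 dvd d"; cases "2 dvd d") (simp_all add: gcd_4_int)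
  then show ?thesis
    using N_count_eq_0 N_count_asymp[OF d] by cases auto
qed

end
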